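(* For every positive integer $n$ and every permutation $\pi:Q_n\to Q_n$ of $Q_n=\{q_1,\dots,q_n\}$ there is a word $\alpha_\pi\in\Sigma_n^*$ such that for all $q,q'\in Q_n$: there exists $w\in\{1\}^*$ with $\langle q,\langle\alpha_\pi,w\rangle,q'\rangle\in\Delta_n^*$ if and only if $q'=\pi(q)$.
   Context: Let $\Sigma_n=\{a_1,\dots,a_n\}$, output monoid the free monoid $\{1\}^*$. $\mathcal{T}_n=\langle\Sigma_n^*\times\{1\}^*,Q,\{s\},\{f\},\Delta_n\rangle$ with $Q=\{s,q_1,\dots,q_n,f\}$ and $\Delta_n=\Delta_{s,n}\cup\Delta_{Q_n}\cup\Delta_{f,n}$ where: $\Delta_{s,n}=\{\langle s,\langle a_j,1^{i-1}\rangle,q_i\rangle:1\le i,j\le n\}$; $\Delta_{Q_n}$ consists, for all $1\le i,j\le n$, of $\langle q_i,\langle a_j,1^n\rangle,q_i\rangle$ if $i\notin\{1,j\}$, $\langle q_1,\langle a_j,1^{n+j-1}\rangle,q_j\rangle$ if $i=1$, and $\langle q_j,\langle a_j,1^{n-j+1}\rangle,q_1\rangle$ if $i=j\neq1$; $\Delta_{f,n}=\{\langle q_i,\langle a_j,1^{2n-i+1}\rangle,f\rangle:1\le j\le i\le n\}$. $\Delta_n^*$ is the generalized transition relation: labels (input word, concatenated output) of paths, including empty paths $\langle q,\langle\varepsilon,\varepsilon\rangle,q\rangle$. *)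

theory Defs
  imports Main
begin

text \<open>Input letter a_j is encoded by the
natural number j (alphabet {1..n}); an output word 1^k of the free monoid {1}^*
is encoded by its length k (concatenation = addition, empty word = 0).\<close>

datatype st = S | Q nat | F

inductive_set Delta :: "nat \<Rightarrow> (st \<times> nat \<times> nat \<times> st) set" for n :: nat where
  d_start: "\<lbrakk>1 \<le> i; i \<le> n; 1 \<le> j; j \<le> n\<rbrakk> \<Longrightarrow> (S, j, i - 1, Q i) \<in> Delta n"
| d_loop: "\<lbrakk>1 \<le> i; i \<le> n; 1 \<le> j; j \<le> n; i \<noteq> 1; i \<noteq> j\<rbrakk> \<Longrightarrow> (Q i, j, n, Q i) \<in> Delta n"
| d_from1: "\<lbrakk>1 \<le> j; j \<le> n\<rbrakk> \<Longrightarrow> (Q 1, j, n + j - 1, Q j) \<in> Delta n"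
| d_back: "\<lbrakk>1 \<le> j; j \<le> n; j \<noteq> 1\<rbrakk> \<Longrightarrow> (Q j, j, n - j + 1, Q 1) \<in> Delta n"
| d_final: "\<lbrakk>1 \<le> j; j \<le> i; i \<le> n\<rbrakk> \<Longrightarrow> (Q i, j, 2 * n - i + 1, F) \<in> Delta n"

inductive Delta_star :: "nat \<Rightarrow> st \<Rightarrow> nat list \<Rightarrow> nat \<Rightarrow> st \<Rightarrow> bool" for n :: nat where
  ds_empty: "Delta_star n q [] 0 q"
| ds_step: "\<lbrakk>(q, a, k, q') \<in> Delta n; Delta_star n q' u m q''\<rbrakk> \<Longrightarrow> Delta_star n q (a # u) (k + m) q''"

end

theory Submission
  imports Defs "HOL-Combinatorics.Permutations"
begin

text \<open>Forgetting outputs, the letter \<open>a\<^sub>j\<close> sends \<open>q\<^sub>i\<close> to \<open>q\<^sub>k\<close> with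
\<open>k = (1 j) i\<close> for the transposition \<open>(1 j)\<close> (the identity if \<open>j = 1\<close>), and this is
the only transition from \<open>q\<^sub>i\<close> into \<open>Q\<^sub>n\<close>. Since \<open>s\<close> is never re-entered and \<open>f\<close> is
a sink, a word leads from \<open>q\<^sub>i\<close> to \<open>q\<^sub>k\<close> exactly when the corresponding product of
transpositions maps \<open>i\<close> to \<open>k\<close>. These transpositions generate the symmetric group
on \<open>{1..n}\<close>, because \<open>(a b) = (1 a)(1 b)(1 a)\<close>.\<close>

definition run :: "nat \<Rightarrow> nat list \<Rightarrow> nat" where
  "run i u = foldl (\<lambda>x a. Transposition.transpose 1 a x) i u"

lemma run_Nil [simp]: "run i [] = i"
  by (simp add: run_def)

lemma run_Cons [simp]: "run i (a # u) = run (Transposition.transpose 1 a i) u"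
  by (simp add: run_def)

lemma run_append [simp]: "run i (u @ v) = run (run i u) v"
  by (simp add: run_def)

lemma Delta_Q_Q_transpose: "(Q i, a, k, Q j) \<in> Delta n \<Longrightarrow> j = Transposition.transpose 1 a i"
  by (erule Delta.cases) auto

lemma Delta_Q_transpose_exists:
  assumes "i \<in> {1..n}" and "a \<in> {1..n}"
  shows "\<exists>k. (Q i, a, k, Q (Transposition.transpose 1 a i)) \<in> Delta n"
proof -
  consider "i = 1" | "i \<noteq> 1" "i = a" | "i \<noteq> 1" "i \<noteq> a"
    by blast
  then show ?thesis
  proof cases
    case 1
    then show ?thesis using assms d_from1[of a n] by auto
  next
    case 2
    then show ?thesis using assms d_back[of a n] by auto
  next
    case 3
    then show ?thesis using assms d_loop[of i n a] by auto
  qed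
qed

lemma Delta_star_from_F: "Delta_star n F u m q \<Longrightarrow> q = F"
  by (induction F u m q rule: Delta_star.induct) (auto elim: Delta.cases)

lemma Delta_star_Q_Q_run: "Delta_star n (Q i) u m (Q j) \<Longrightarrow> j = run i u"
proof (induction "Q i" u m "Q j" arbitrary: i rule: Delta_star.induct)
  case ds_empty
  then show ?case by simp
next
  case (ds_step a k q' u m)
  show ?case
  proof (cases q')
    case S
    with ds_step.hyps(1) show ?thesis by (auto elim: Delta.cases)
  next
    case (Q i')
    with ds_step show ?thesis by (auto dest: Delta_Q_Q_transpose)
  next
    case F
    with ds_step.hyps(2) show ?thesis by (auto dest: Delta_star_from_F)
  qed
qed

lemma Delta_star_Q_run_exists:
  "u \<in> lists {1..n} \<Longrightarrow> i \<in> {1..n} \<Longrightarrow> \<exists>m. Delta_star n (Q i) u m (Q (run i u))"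
proof (induction u arbitrary: i)
  case Nil
  then show ?case by (auto intro: ds_empty)
next
  case (Cons a u)
  let ?i' = "Transposition.transpose 1 a i"
  from Cons.prems obtain k where "(Q i, a, k, Q ?i') \<in> Delta n"
    using Delta_Q_transpose_exists by fastforce
  moreover have "?i' \<in> {1..n}"
    using Cons.prems by (auto simp: Transposition.transpose_def)
  then obtain m where "Delta_star n (Q ?i') u m (Q (run ?i' u))"
    using Cons by auto
  ultimately show ?case by (auto intro: ds_step)
qed

lemma Delta_star_Q_Q_iff:
  "u \<in> lists {1..n} \<Longrightarrow> i \<in> {1..n} \<Longrightarrow> (\<exists>m. Delta_star n (Q i) u m (Q j)) \<longleftrightarrow> j = run i u"
  using Delta_star_Q_Q_run Delta_star_Q_run_exists by blast

lemma run_transpose_word: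
  assumes "a \<in> {1..n}" and "b \<in> {1..n}" and "a \<noteq> b"
  shows "\<exists>u \<in> lists {1..n}. \<forall>x. run x u = Transposition.transpose a b x"
proof -
  consider "a = 1" | "b = 1" | "a \<noteq> 1" "b \<noteq> 1"
    by blast
  then show ?thesis
  proof cases
    case 1
    then show ?thesis using assms by (intro bexI[of _ "[b]"]) auto
  next
    case 2
    then show ?thesis using assms by (intro bexI[of _ "[a]"]) (auto simp: transpose_commute)
  next
    case 3
    then have "run x [a, b, a] = Transposition.transpose a b x" for x
      using assms transpose_triple[of a b 1] by (simp add: transpose_commute)
    then show ?thesis using assms by (intro bexI[of _ "[a, b, a]"]) auto
  qed
qed

lemma run_permutation_word:
  assumes "p permutes {1..n}"
  shows "\<exists>u \<in> lists {1..n}. \<forall>x. run x u = p x"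
  using assms finite_atLeastAtMost[of 1 n]
proof (induction rule: permutes_induct)
  case id
  show ?case by (intro bexI[of _ "[]"]) auto
next
  case (swap a b p)
  from swap.IH obtain u where "u \<in> lists {1..n}" "\<forall>x. run x u = p x"
    by blast
  moreover from run_transpose_word[OF swap.hyps(1-3)] obtain v where
    "v \<in> lists {1..n}" "\<forall>x. run x v = Transposition.transpose a b x"
    by blast
  ultimately show ?case by (intro bexI[of _ "u @ v"]) auto
qed

theorem lemma10:
  fixes n :: nat and \<pi> :: "nat \<Rightarrow> nat"
  assumes "1 \<le> n"
    and "bij_betw \<pi> {1..n} {1..n}"
  shows "\<exists>\<alpha> \<in> lists {1..n}. \<forall>i \<in> {1..n}. \<forall>j \<in> {1..n}.
           (\<exists>w. Delta_star n (Q i) \<alpha> w (Q j)) \<longleftrightarrow> j = \<pi> i"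
proof -
  define p where "p x = (if x \<in> {1..n} then \<pi> x else x)" for x
  have "bij_betw p {1..n} {1..n}"
    using assms(2) by (rule bij_betw_cong[THEN iffD1, rotated]) (simp add: p_def)
  then have "p permutes {1..n}"
    by (rule bij_imp_permutes) (auto simp: p_def)
  then obtain \<alpha> where "\<alpha> \<in> lists {1..n}" and "\<forall>x. run x \<alpha> = p x"
    using run_permutation_word by blast
  then show ?thesis
    by (intro bexI[of _ \<alpha>]) (auto simp: Delta_star_Q_Q_iff p_def)
qed

end
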